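(* There do not exist constants $\ell,m\in\mathbb{N}$ with the following property: every trinomial $f\in\mathbb{R}[x_1]$ that is positive on all of $\mathbb{R}$ can be written as $f=g_1^2+\cdots+g_\ell^2$ for some $g_1,\dots,g_\ell\in\mathbb{R}[x_1]$, each having at most $m$ monomial terms.
   Context: A trinomial is a univariate polynomial with exactly three nonzero monomial terms. *)

theory Defs
  imports "HOL-Computational_Algebra.Polynomial"
begin

definition num_terms :: "'a::zero poly \<Rightarrow> nat" where
  "num_terms p = card {k. coeff p k \<noteq> 0}"

definition trinomial :: "'a::zero poly \<Rightarrow> bool" where
  "trinomial p \<longleftrightarrow> num_terms p = 3"

end

theory Submission
  imports Defs
begin

(* Suppose every positive trinomial were a sum of
   l squares of polynomials with at most m terms each.  The exponents occurring in the
   g_i form a set of at most N = l*m natural numbers, so by pigeonhole one of the N+1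
   dyadic blocks [2^j, 2^(j+1)), j <= N, contains none of them.  With d = 2^j, every
   g_i splits as (its part below d) + (its part from 2d on); hence the part of
   g_1^2 + ... + g_l^2 below degree 2d is the sum of the squares of the truncations
   of the g_i, a polynomial that is nonnegative on the reals.  For the positive
   trinomial f = 1 - x + x^D with D = 2^(N+1) >= 2d, the part of f below 2d is 1 - x,
   which is negative at x = 2: contradiction. *)

lemma finite_coeff_support: "finite {k. coeff (p :: 'a::zero poly) k \<noteq> 0}"
proof -
  have "{k. coeff p k \<noteq> 0} \<subseteq> {..degree p}"
    using le_degree by auto
  then show ?thesis
    using finite_subset by blast
qed

lemma dyadic_block_gap:
  fixes E :: "nat set"
  assumes "finite E" and "card E \<le> N"
  shows "\<exists>j\<le>N. \<forall>e\<in>E. \<not> (2 ^ j \<le> e \<and> e < 2 ^ (j + 1))"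
proof (rule ccontr)
  assume "\<not> ?thesis"
  then obtain h where h: "\<And>j. j \<le> N \<Longrightarrow> h j \<in> E \<and> 2 ^ j \<le> h j \<and> h j < (2::nat) ^ (j + 1)"
    by metis
  have "inj_on h {..N}"
  proof (rule inj_onI)
    fix j j' assume "j \<in> {..N}" "j' \<in> {..N}" "h j = h j'"
    then have "(2::nat) ^ j < 2 ^ (j' + 1)" "(2::nat) ^ j' < 2 ^ (j + 1)"
      using h by (metis atMost_iff le_less_trans)+
    then have "j < j' + 1" "j' < j + 1"
      by (metis power_strict_increasing_iff one_less_numeral_iff semiring_norm(76))+
    then show "j = j'" by simp
  qed
  moreover have "h ` {..N} \<subseteq> E"
    using h by auto
  ultimately have "card {..N} \<le> card E"
    using assms(1) by (metis card_inj_on_le)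
  with assms(2) show False by simp
qed

lemma common_dyadic_gap:
  fixes g :: "nat \<Rightarrow> 'a::zero poly"
  assumes "\<forall>i<l. num_terms (g i) \<le> m"
  shows "\<exists>j\<le>l * m. \<forall>i<l. \<forall>k. 2 ^ j \<le> k \<and> k < 2 ^ (j + 1) \<longrightarrow> coeff (g i) k = 0"
proof -
  define E where "E = (\<Union>i<l. {k. coeff (g i) k \<noteq> 0})"
  have "card E \<le> (\<Sum>i<l. card {k. coeff (g i) k \<noteq> 0})"
    unfolding E_def by (rule card_UN_le) simp
  also have "\<dots> \<le> (\<Sum>i<l. m)"
    using assms by (intro sum_mono) (auto simp: num_terms_def)
  finally have "card E \<le> l * m" by simp
  moreover have "finite E"
    unfolding E_def using finite_coeff_support by auto
  ultimately obtain j where "j \<le> l * m" "\<forall>e\<in>E. \<not> (2 ^ j \<le> e \<and> e < 2 ^ (j + 1))"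
    using dyadic_block_gap by blast
  then show ?thesis
    unfolding E_def by blast
qed

lemma poly_cutoff_sum: "poly_cutoff n (\<Sum>i\<in>I. p i) = (\<Sum>i\<in>I. poly_cutoff n (p i))"
  by (rule poly_eqI) (simp add: coeff_poly_cutoff coeff_sum)

lemma coeff_mult_eq_0_below:
  fixes q r :: "'a::comm_semiring_0 poly"
  assumes "\<forall>j<d. coeff q j = 0" and "k < d"
  shows "coeff (q * r) k = 0"
  unfolding coeff_mult using assms by (intro sum.neutral) auto

lemma coeff_square_eq_0_above:
  fixes p :: "'a::comm_semiring_1 poly"
  assumes "\<forall>j\<ge>d. coeff p j = 0" and "2 * d \<le> k"
  shows "coeff (p ^ 2) k = 0"
proof -
  have "coeff p i * coeff p (k - i) = 0" for i
    using assms by (cases "i < d") auto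
  then show ?thesis
    unfolding power2_eq_square coeff_mult by simp
qed

lemma poly_cutoff_square_gap:
  fixes g :: "'a::comm_ring_1 poly"
  assumes gap: "\<forall>k. d \<le> k \<and> k < 2 * d \<longrightarrow> coeff g k = 0"
  shows "poly_cutoff (2 * d) (g ^ 2) = (poly_cutoff d g) ^ 2"
proof -
  define p where "p = poly_cutoff d g"
  define q where "q = g - p"
  have q_low: "\<forall>k<2 * d. coeff q k = 0"
    using gap by (auto simp: q_def p_def coeff_poly_cutoff)
  have p_high: "\<forall>k\<ge>d. coeff p k = 0"
    by (simp add: p_def coeff_poly_cutoff)
  have split: "g ^ 2 = p ^ 2 + q * (2 * p + q)"
    by (simp add: q_def power2_eq_square algebra_simps)
  show ?thesis
  proof (rule poly_eqI)
    fix k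
    show "coeff (poly_cutoff (2 * d) (g ^ 2)) k = coeff ((poly_cutoff d g) ^ 2) k"
      using coeff_mult_eq_0_below[OF q_low] coeff_square_eq_0_above[OF p_high]
      by (simp add: coeff_poly_cutoff split p_def[symmetric])
  qed
qed

text \<open>Consequently a sum of squares of polynomials sharing the gap \<open>[d, 2 d)\<close> has its
  part below degree \<open>2 d\<close> again a sum of squares, hence nonnegative on the reals.\<close>

lemma poly_cutoff_sum_squares_nonneg:
  fixes g :: "nat \<Rightarrow> real poly"
  assumes "\<forall>i\<in>I. \<forall>k. d \<le> k \<and> k < 2 * d \<longrightarrow> coeff (g i) k = 0"
  shows "poly (poly_cutoff (2 * d) (\<Sum>i\<in>I. (g i) ^ 2)) x \<ge> 0"
proof -
  have "poly_cutoff (2 * d) (\<Sum>i\<in>I. (g i) ^ 2) = (\<Sum>i\<in>I. (poly_cutoff d (g i)) ^ 2)"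
    unfolding poly_cutoff_sum using assms by (auto intro!: sum.cong poly_cutoff_square_gap)
  then show ?thesis
    by (simp add: poly_sum sum_nonneg)
qed

lemma positive_trinomial:
  fixes D :: nat
  assumes "even D" and "D \<ge> 2"
  shows "trinomial ([:1, -1:] + monom (1::real) D)" (is "trinomial ?f")
    and "poly ([:1, -1:] + monom (1::real) D) x > 0"
proof -
  have "coeff ?f k = (if k = 0 then 1 else if k = 1 then -1 else if k = D then 1 else 0)" for k
    using assms(2) by (cases k) (auto simp: coeff_monom coeff_pCons split: nat.split)
  then have "{k. coeff ?f k \<noteq> 0} = {0, 1, D}"
    using assms(2) by auto
  moreover have "card {0, 1, D} = 3"
    using assms(2) by auto
  ultimately show "trinomial ?f"
    unfolding trinomial_def num_terms_def by simp
  have poly_f: "poly ?f x = 1 - x + x ^ D"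
    by (simp add: poly_monom)
  have "x ^ D \<ge> 0"
    using assms(1) by (simp add: zero_le_power_eq)
  moreover have "x \<le> x ^ D" if "1 \<le> x"
    using power_increasing[of 1 D x] that assms(2) by simp
  ultimately show "poly ?f x > 0"
    unfolding poly_f by (cases "x < 1") auto
qed

lemma poly_cutoff_positive_trinomial:
  assumes "2 \<le> c" and "c \<le> D"
  shows "poly_cutoff c ([:1, -1:] + monom (1::real) D) = [:1, -1:]"
proof (rule poly_eqI)
  fix k
  show "coeff (poly_cutoff c ([:1, -1:] + monom 1 D)) k = coeff [:1, -1:] k"
    using assms by (cases k) (auto simp: coeff_poly_cutoff coeff_monom coeff_pCons
        split: nat.split)
qed

theorem theorem1p2:
  shows "\<not> (\<exists>(l::nat) (m::nat). \<forall>f :: real poly.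
            trinomial f \<and> (\<forall>x::real. poly f x > 0) \<longrightarrow>
            (\<exists>g :: nat \<Rightarrow> real poly.
               f = (\<Sum>i<l. (g i)\<^sup>2) \<and> (\<forall>i<l. num_terms (g i) \<le> m)))"
proof
  assume "\<exists>(l::nat) (m::nat). \<forall>f :: real poly.
            trinomial f \<and> (\<forall>x::real. poly f x > 0) \<longrightarrow>
            (\<exists>g :: nat \<Rightarrow> real poly.
               f = (\<Sum>i<l. (g i)\<^sup>2) \<and> (\<forall>i<l. num_terms (g i) \<le> m))"
  then obtain l m :: nat where sos: "\<And>f :: real poly. trinomial f \<Longrightarrow> (\<forall>x. poly f x > 0) \<Longrightarrow>
      \<exists>g. f = (\<Sum>i<l. (g i)\<^sup>2) \<and> (\<forall>i<l. num_terms (g i) \<le> m)"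
    by blast
  define D :: nat where "D = 2 ^ (l * m + 1)"
  define f where "f = [:1, -1:] + monom (1::real) D"
  have "even D" "D \<ge> 2"
    by (simp_all add: D_def)
  then obtain g where f_sos: "f = (\<Sum>i<l. (g i)\<^sup>2)" and terms: "\<forall>i<l. num_terms (g i) \<le> m"
    using sos positive_trinomial unfolding f_def by blast
  obtain j where "j \<le> l * m"
    and gap: "\<forall>i<l. \<forall>k. 2 ^ j \<le> k \<and> k < 2 ^ (j + 1) \<longrightarrow> coeff (g i) k = 0"
    using common_dyadic_gap[OF terms] by blast
  define d :: nat where "d = 2 ^ j"
  have "2 \<le> 2 * d" "2 * d \<le> D"
    using \<open>j \<le> l * m\<close> by (simp_all add: d_def D_def)
  then have "poly_cutoff (2 * d) f = [:1, -1:]"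
    unfolding f_def by (rule poly_cutoff_positive_trinomial)
  moreover have "poly (poly_cutoff (2 * d) f) 2 \<ge> 0"
    unfolding f_sos using gap by (intro poly_cutoff_sum_squares_nonneg) (auto simp: d_def)
  ultimately show False by simp
qed

end
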